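(* Let $G$ be a finitely generated group and $\Omega\le\Lambda\le\operatorname{Aut}(G)$ with $\Omega$ of finite index in $\Lambda$. Then $\alpha_{G^\Omega}\sim\alpha_{G^\Lambda}$.
   Context: Fix a finite generating set $\Sigma$ of $G$. For $\Omega\le\operatorname{Aut}(G)$, the $\Omega$-automorphic growth function sends $n$ to the number of $\Omega$-orbits of $G$ containing an element of word length at most $n$ with respect to $\Sigma$; $\alpha_{G^\Omega}$ is its $\sim$-class. For non-decreasing non-zero $f,g\colon\mathbb{N}\to\mathbb{N}$, $f\preccurlyeq g$ means there is $\lambda\in\mathbb{N}\setminus\{0\}$ with $f(n)\le\lambda g(\lambda n+\lambda)+\lambda$ for all $n$, and $f\sim g$ means $f\preccurlyeq g$ and $g\preccurlyeq f$. *)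

theory Defs
  imports "HOL-Algebra.Algebra"
begin

definition word_ball :: "('a, 'b) monoid_scheme \<Rightarrow> 'a set \<Rightarrow> nat \<Rightarrow> 'a set" where
  "word_ball G S n = {g. \<exists>ws. length ws \<le> n \<and> set ws \<subseteq> S \<union> (\<lambda>x. inv\<^bsub>G\<^esub> x) ` S
                          \<and> foldr (\<lambda>x y. x \<otimes>\<^bsub>G\<^esub> y) ws \<one>\<^bsub>G\<^esub> = g}"

definition aut_orbit :: "('a \<Rightarrow> 'a) set \<Rightarrow> 'a \<Rightarrow> 'a set" where
  "aut_orbit \<Omega> g = (\<lambda>\<phi>. \<phi> g) ` \<Omega>"

definition aut_growth :: "('a, 'b) monoid_scheme \<Rightarrow> 'a set \<Rightarrow> ('a \<Rightarrow> 'a) set \<Rightarrow> nat \<Rightarrow> nat" where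
  "aut_growth G S \<Omega> n = card {Orb. Orb \<in> aut_orbit \<Omega> ` carrier G \<and> Orb \<inter> word_ball G S n \<noteq> {}}"

definition growth_le :: "(nat \<Rightarrow> nat) \<Rightarrow> (nat \<Rightarrow> nat) \<Rightarrow> bool" (infix "\<preceq>\<^sub>g" 50) where
  "f \<preceq>\<^sub>g g \<longleftrightarrow> (\<exists>c::nat. c \<noteq> 0 \<and> (\<forall>n. f n \<le> c * g (c * n + c) + c))"

definition growth_equiv :: "(nat \<Rightarrow> nat) \<Rightarrow> (nat \<Rightarrow> nat) \<Rightarrow> bool" (infix "\<sim>\<^sub>g" 50) where
  "f \<sim>\<^sub>g g \<longleftrightarrow> f \<preceq>\<^sub>g g \<and> g \<preceq>\<^sub>g f"

end

theory Submission
  imports Defs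
begin

(* Applying a right coset \<Omega>\<lambda> to g gives the \<Omega>-orbit of \<lambda> g. Hence the \<Omega>-orbits
   contained in the \<Lambda>-orbit of g are indexed by the right cosets of \<Omega> in \<Lambda>, so a
   \<Lambda>-orbit splits into at most [\<Lambda>:\<Omega>] \<Omega>-orbits, while every \<Omega>-orbit lies in a
   single \<Lambda>-orbit. Counting the orbits that meet the ball of radius n gives
   growth_\<Lambda>(n) \<le> growth_\<Omega>(n) \<le> [\<Lambda>:\<Omega>] growth_\<Lambda>(n), with no rescaling of the radius. *)

lemma AutoGroup_mult_apply:
  assumes "\<phi> \<in> auto G" "\<psi> \<in> auto G" "x \<in> carrier G"
  shows "(\<phi> \<otimes>\<^bsub>AutoGroup G\<^esub> \<psi>) x = \<phi> (\<psi> x)"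
  using assms by (auto simp: AutoGroup_def BijGroup_def auto_def compose_def)

lemma AutoGroup_one_apply: "x \<in> carrier G \<Longrightarrow> \<one>\<^bsub>AutoGroup G\<^esub> x = x"
  by (simp add: AutoGroup_def BijGroup_def)

lemma subgroup_AutoGroup_subset_auto: "subgroup K (AutoGroup G) \<Longrightarrow> K \<subseteq> auto G"
  using subgroup.subset by (fastforce simp: AutoGroup_def)

lemma aut_orbit_r_coset:
  assumes "K \<subseteq> auto G" "\<theta> \<in> auto G" "g \<in> carrier G"
  shows "aut_orbit (K #>\<^bsub>AutoGroup G\<^esub> \<theta>) g = aut_orbit K (\<theta> g)"
proof -
  have "aut_orbit (K #>\<^bsub>AutoGroup G\<^esub> \<theta>) g = (\<lambda>\<phi>. (\<phi> \<otimes>\<^bsub>AutoGroup G\<^esub> \<theta>) g) ` K"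
    by (auto simp: aut_orbit_def r_coset_def)
  also have "\<dots> = (\<lambda>\<phi>. \<phi> (\<theta> g)) ` K"
    using assms by (intro image_cong) (auto simp: AutoGroup_mult_apply)
  finally show ?thesis by (simp add: aut_orbit_def)
qed

lemma aut_orbit_self:
  assumes "subgroup K (AutoGroup G)" "g \<in> carrier G"
  shows "g \<in> aut_orbit K g"
  using subgroup.one_closed[OF assms(1)] AutoGroup_one_apply[OF assms(2)]
  unfolding aut_orbit_def by (metis image_eqI)

lemma aut_orbit_apply:
  assumes "group G" "subgroup K (AutoGroup G)" "\<kappa> \<in> K" "g \<in> carrier G"
  shows "aut_orbit K (\<kappa> g) = aut_orbit K g"
proof -
  have "K #>\<^bsub>AutoGroup G\<^esub> \<kappa> = K"
    using subgroup.rcos_const[OF assms(2) group.AutoGroup[OF assms(1)] assms(3)] .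
  with aut_orbit_r_coset[of K G \<kappa> g] show ?thesis
    using assms subgroup_AutoGroup_subset_auto by auto
qed

lemma aut_orbit_eq:
  assumes "group G" "subgroup K (AutoGroup G)" "g \<in> carrier G" "x \<in> aut_orbit K g"
  shows "aut_orbit K x = aut_orbit K g"
proof -
  obtain \<kappa> where "\<kappa> \<in> K" "x = \<kappa> g" using assms(4) by (auto simp: aut_orbit_def)
  then show ?thesis using aut_orbit_apply[OF assms(1,2)] assms(3) by simp
qed

lemma aut_orbit_mono: "\<Omega> \<subseteq> \<Lambda> \<Longrightarrow> aut_orbit \<Omega> g \<subseteq> aut_orbit \<Lambda> g"
  by (auto simp: aut_orbit_def)

lemma aut_orbits_in_aut_orbit:
  assumes "\<Omega> \<subseteq> auto G" "\<Lambda> \<subseteq> auto G" "g \<in> carrier G"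
  shows "aut_orbit \<Omega> ` aut_orbit \<Lambda> g =
    (\<lambda>C. aut_orbit C g) ` (rcosets\<^bsub>(AutoGroup G)\<lparr>carrier := \<Lambda>\<rparr>\<^esub> \<Omega>)"
proof -
  have "aut_orbit \<Omega> ` aut_orbit \<Lambda> g = (\<lambda>\<theta>. aut_orbit \<Omega> (\<theta> g)) ` \<Lambda>"
    by (simp add: aut_orbit_def image_image)
  also have "\<dots> = (\<lambda>\<theta>. aut_orbit (\<Omega> #>\<^bsub>AutoGroup G\<^esub> \<theta>) g) ` \<Lambda>"
    using assms by (intro image_cong) (auto simp: aut_orbit_r_coset)
  also have "\<dots> = (\<lambda>C. aut_orbit C g) ` (rcosets\<^bsub>(AutoGroup G)\<lparr>carrier := \<Lambda>\<rparr>\<^esub> \<Omega>)"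
    by (auto simp: RCOSETS_def r_coset_def)
  finally show ?thesis .
qed

lemma card_aut_orbits_antimono:
  assumes "group G" "subgroup \<Omega> (AutoGroup G)" "subgroup \<Lambda> (AutoGroup G)" "\<Omega> \<subseteq> \<Lambda>"
    and "finite B" "B \<subseteq> carrier G"
  shows "card (aut_orbit \<Lambda> ` B) \<le> card (aut_orbit \<Omega> ` B)"
proof -
  have "aut_orbit \<Lambda> x = \<Union> (aut_orbit \<Lambda> ` aut_orbit \<Omega> x)" if "x \<in> B" for x
  proof -
    have x: "x \<in> carrier G" using that assms(6) by auto
    then have "aut_orbit \<Lambda> y = aut_orbit \<Lambda> x" if "y \<in> aut_orbit \<Omega> x" for y
      using that aut_orbit_eq[OF assms(1,3) x] aut_orbit_mono[OF assms(4)] by blast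
    then show ?thesis using aut_orbit_self[OF assms(2) x] by blast
  qed
  then have "aut_orbit \<Lambda> ` B \<subseteq> (\<lambda>Q. \<Union> (aut_orbit \<Lambda> ` Q)) ` aut_orbit \<Omega> ` B"
    by auto
  then show ?thesis using assms(5) by (intro surj_card_le) auto
qed

lemma card_aut_orbits_le_index_mult:
  assumes "subgroup \<Omega> (AutoGroup G)" "subgroup \<Lambda> (AutoGroup G)"
    and "finite (rcosets\<^bsub>(AutoGroup G)\<lparr>carrier := \<Lambda>\<rparr>\<^esub> \<Omega>)"
    and "finite B" "B \<subseteq> carrier G"
  shows "card (aut_orbit \<Omega> ` B) \<le>
    card (rcosets\<^bsub>(AutoGroup G)\<lparr>carrier := \<Lambda>\<rparr>\<^esub> \<Omega>) * card (aut_orbit \<Lambda> ` B)"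
proof -
  let ?R = "rcosets\<^bsub>(AutoGroup G)\<lparr>carrier := \<Lambda>\<rparr>\<^esub> \<Omega>"
  let ?\<Q> = "aut_orbit \<Lambda> ` B"
  have orbit_splits: "finite (aut_orbit \<Omega> ` Q) \<and> card (aut_orbit \<Omega> ` Q) \<le> card ?R"
    if "Q \<in> ?\<Q>" for Q
  proof -
    obtain g where "g \<in> B" "Q = aut_orbit \<Lambda> g" using \<open>Q \<in> ?\<Q>\<close> by blast
    then have "aut_orbit \<Omega> ` Q = (\<lambda>C. aut_orbit C g) ` ?R"
      using assms(5) subgroup_AutoGroup_subset_auto[OF assms(1)]
        subgroup_AutoGroup_subset_auto[OF assms(2)]
      by (simp add: aut_orbits_in_aut_orbit subset_iff)
    then show ?thesis using assms(3) by (simp add: card_image_le)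
  qed
  have "aut_orbit \<Omega> ` B \<subseteq> (\<Union>Q \<in> ?\<Q>. aut_orbit \<Omega> ` Q)"
    using aut_orbit_self[OF assms(2)] assms(5) by blast
  then have "card (aut_orbit \<Omega> ` B) \<le> card (\<Union>Q \<in> ?\<Q>. aut_orbit \<Omega> ` Q)"
    using orbit_splits assms(4) by (intro card_mono finite_UN_I) auto
  also have "\<dots> \<le> (\<Sum>Q \<in> ?\<Q>. card (aut_orbit \<Omega> ` Q))"
    by (rule card_UN_le) (simp add: assms(4))
  also have "\<dots> \<le> card ?\<Q> * card ?R"
    using sum_bounded_above[of ?\<Q> "\<lambda>Q. card (aut_orbit \<Omega> ` Q)" "card ?R"] orbit_splits by simp
  finally show ?thesis by (simp add: mult.commute)
qed

lemma word_ball_subset_carrier: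
  assumes "group G" "S \<subseteq> carrier G"
  shows "word_ball G S n \<subseteq> carrier G"
proof
  fix g assume "g \<in> word_ball G S n"
  then obtain ws where ws: "set ws \<subseteq> S \<union> (\<lambda>x. inv\<^bsub>G\<^esub> x) ` S"
      "foldr (\<lambda>x y. x \<otimes>\<^bsub>G\<^esub> y) ws \<one>\<^bsub>G\<^esub> = g"
    by (auto simp: word_ball_def)
  interpret group G by (rule assms(1))
  have "set ws \<subseteq> carrier G" using ws(1) assms(2) by auto
  then have "foldr (\<lambda>x y. x \<otimes>\<^bsub>G\<^esub> y) ws \<one>\<^bsub>G\<^esub> \<in> carrier G"
    by (induction ws) auto
  then show "g \<in> carrier G" using ws(2) by simp
qed

lemma finite_word_ball:
  assumes "finite S"
  shows "finite (word_ball G S n)"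
proof -
  let ?T = "S \<union> (\<lambda>x. inv\<^bsub>G\<^esub> x) ` S"
  have "word_ball G S n =
      (\<lambda>ws. foldr (\<lambda>x y. x \<otimes>\<^bsub>G\<^esub> y) ws \<one>\<^bsub>G\<^esub>) ` {ws. set ws \<subseteq> ?T \<and> length ws \<le> n}"
    by (auto simp: word_ball_def)
  moreover have "finite {ws. set ws \<subseteq> ?T \<and> length ws \<le> n}"
    using assms by (intro finite_lists_length_le) auto
  ultimately show ?thesis by simp
qed

lemma word_ball_mono: "n \<le> m \<Longrightarrow> word_ball G S n \<subseteq> word_ball G S m"
  unfolding word_ball_def using le_trans by blast

lemma aut_growth_eq_card:
  assumes "group G" "S \<subseteq> carrier G" "subgroup K (AutoGroup G)"
  shows "aut_growth G S K n = card (aut_orbit K ` word_ball G S n)"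
proof -
  let ?B = "word_ball G S n"
  have "{Orb. Orb \<in> aut_orbit K ` carrier G \<and> Orb \<inter> ?B \<noteq> {}} = aut_orbit K ` ?B"
  proof (intro equalityI subsetI)
    fix Q assume "Q \<in> {Orb. Orb \<in> aut_orbit K ` carrier G \<and> Orb \<inter> ?B \<noteq> {}}"
    then obtain g x where "g \<in> carrier G" "Q = aut_orbit K g" "x \<in> Q" "x \<in> ?B"
      by auto
    then show "Q \<in> aut_orbit K ` ?B" using aut_orbit_eq[OF assms(1,3)] by blast
  next
    fix Q assume "Q \<in> aut_orbit K ` ?B"
    then show "Q \<in> {Orb. Orb \<in> aut_orbit K ` carrier G \<and> Orb \<inter> ?B \<noteq> {}}"
      using word_ball_subset_carrier[OF assms(1,2)] aut_orbit_self[OF assms(3)] by blast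
  qed
  then show ?thesis by (simp add: aut_growth_def)
qed

lemma mono_aut_growth:
  assumes "group G" "finite S" "S \<subseteq> carrier G" "subgroup K (AutoGroup G)"
  shows "mono (aut_growth G S K)"
proof (rule monoI)
  fix n m :: nat assume "n \<le> m"
  then show "aut_growth G S K n \<le> aut_growth G S K m"
    unfolding aut_growth_eq_card[OF assms(1,3,4)]
    using finite_word_ball[OF assms(2), of G m] word_ball_mono[OF \<open>n \<le> m\<close>, of G S]
    by (simp add: card_mono image_mono)
qed

lemma growth_le_if_le_mult:
  assumes "mono g" "\<And>n. f n \<le> c * g n"
  shows "f \<preceq>\<^sub>g g"
  unfolding growth_le_def
proof (intro exI[of _ "Suc c"] conjI allI)
  fix n
  have "g n \<le> g (Suc c * n + Suc c)"
    using assms(1) by (rule monoD) simp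
  then have "c * g n \<le> Suc c * g (Suc c * n + Suc c)"
    by (intro mult_le_mono) auto
  then show "f n \<le> Suc c * g (Suc c * n + Suc c) + Suc c"
    using assms(2)[of n] by linarith
qed simp

theorem mainTheorem16:
  fixes G :: "('a, 'b) monoid_scheme" and S :: "'a set"
    and \<Omega> \<Lambda> :: "('a \<Rightarrow> 'a) set"
  assumes "group G"
    and "finite S" and "S \<subseteq> carrier G" and "generate G S = carrier G"
    and "subgroup \<Lambda> (AutoGroup G)" and "subgroup \<Omega> (AutoGroup G)" and "\<Omega> \<subseteq> \<Lambda>"
    and "finite (rcosets\<^bsub>(AutoGroup G)\<lparr>carrier := \<Lambda>\<rparr>\<^esub> \<Omega>)"
  shows "aut_growth G S \<Omega> \<sim>\<^sub>g aut_growth G S \<Lambda>"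
proof -
  note ball = finite_word_ball[OF assms(2)] word_ball_subset_carrier[OF assms(1,3)]
  note card_eq = aut_growth_eq_card[OF assms(1,3,5)] aut_growth_eq_card[OF assms(1,3,6)]
  have "aut_growth G S \<Omega> \<preceq>\<^sub>g aut_growth G S \<Lambda>"
  proof (rule growth_le_if_le_mult)
    show "mono (aut_growth G S \<Lambda>)" by (rule mono_aut_growth[OF assms(1-3,5)])
    show "aut_growth G S \<Omega> n \<le>
        card (rcosets\<^bsub>(AutoGroup G)\<lparr>carrier := \<Lambda>\<rparr>\<^esub> \<Omega>) * aut_growth G S \<Lambda> n" for n
      unfolding card_eq by (rule card_aut_orbits_le_index_mult[OF assms(6,5,8) ball])
  qed
  moreover have "aut_growth G S \<Lambda> \<preceq>\<^sub>g aut_growth G S \<Omega>"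
  proof (rule growth_le_if_le_mult)
    show "mono (aut_growth G S \<Omega>)" by (rule mono_aut_growth[OF assms(1-3,6)])
    show "aut_growth G S \<Lambda> n \<le> 1 * aut_growth G S \<Omega> n" for n
      unfolding card_eq using card_aut_orbits_antimono[OF assms(1,6,5,7) ball] by simp
  qed
  ultimately show ?thesis unfolding growth_equiv_def ..
qed

end
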